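(* Fix $\mathbf a=(a_\alpha)_{\alpha\in R^+}\in\mathbb Z_{\ge0}^{n(n-1)/2}$. Then the set $\{\overline{\mathbf f^{\mathbf s}}:\mathbf s\in S(\mathbf a)\}$ of images of the monomials $\mathbf f^{\mathbf s}$ spans $S(\mathfrak n^-)/\mathcal I(\mathbf a)$.
   Context: Let $\mathfrak{sl}_n=\mathfrak n^+\oplus\mathfrak h\oplus\mathfrak n^-$ with simple roots $\alpha_1,\dots,\alpha_{n-1}$ and positive roots $R^+=\{\alpha_{k,\ell}=\alpha_k+\dots+\alpha_\ell:1\le k\le\ell\le n-1\}$; $f_\alpha\in\mathfrak g_{-\alpha}$, $e_\alpha\in\mathfrak g_\alpha$ are root vectors. $S(\mathfrak n^-)$ is the symmetric algebra (polynomial ring) of $\mathfrak n^-$, identified with the associated graded algebra of $U(\mathfrak n^-)$ for the PBW filtration. $\mathfrak n^+$ acts on $\mathfrak n^-\cong\mathfrak{sl}_n/(\mathfrak n^+\oplus\mathfrak h)$ via the adjoint action (so $e_\alpha\circ f_\beta$ is a multiple of $f_{\beta-\alpha}$ if $\beta-\alpha\in R^+$ and $0$ otherwise), and this action is extended to $S(\mathfrak n^-)$ by derivations; denote it by $\circ$. For $\mathbf a=(a_\alpha)$, $\mathcal I(\mathbf a)\subset S(\mathfrak n^-)$ is the ideal generated by $\sum_{\alpha\in R^+}U(\mathfrak n^+)\circ f_\alpha^{a_\alpha+1}$. A Dyck path is a sequence $\mathbf p=(\beta_1,\dots,\beta_s)$, $s\ge1$, of positive roots such that if $\beta_i=\alpha_{k,\ell}$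 then $\beta_{i+1}\in\{\alpha_{k+1,\ell},\alpha_{k,\ell+1}\}$; if $\beta_1=\alpha_{k_1,\ell_1}$ and $\beta_s=\alpha_{k_s,\ell_s}$, its base root is $\beta(\mathbf p)=\alpha_{k_1,\ell_s}$. Let $\mathcal P(\mathbf a)=\{(x_\alpha)\in\mathbb R^{n(n-1)/2}:\sum_{\alpha\in\mathbf p}x_\alpha\le a_{\beta(\mathbf p)}\text{ for all Dyck paths }\mathbf p\}$ and $S(\mathbf a)=\mathcal P(\mathbf a)\cap\mathbb Z_{\ge0}^{n(n-1)/2}$. For $\mathbf t=(t_\alpha)\in\mathbb Z_{\ge0}^{n(n-1)/2}$, $\mathbf f^{\mathbf t}=\prod_{\alpha\in R^+}f_\alpha^{t_\alpha}\in S(\mathfrak n^-)$. *)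

theory Defs
  imports Complex_Main "HOL-Library.Poly_Mapping"
begin

text \<open>Positive roots alpha_{k,l} of sl_n are encoded as pairs (k,l) with 1 <= k <= l <= n-1.
  S(n^-) is the polynomial ring over the complex numbers in the variables f_(k,l),
  (k,l) positive roots; we realise it inside the polynomial ring
  ((nat*nat) =>0 nat) =>0 complex as the polynomials whose monomials only use
  variables indexed by positive roots.\<close>

type_synonym root = "nat \<times> nat"
type_synonym mono = "root \<Rightarrow>\<^sub>0 nat"
type_synonym poly = "mono \<Rightarrow>\<^sub>0 complex"

definition Rplus :: "nat \<Rightarrow> root set" where
  "Rplus n = {(k, l). 1 \<le> k \<and> k \<le> l \<and> l \<le> n - 1}"

definition Sn :: "nat \<Rightarrow> poly set" where
  "Sn n = {p. \<forall>m \<in> Poly_Mapping.keys p. Poly_Mapping.keys m \<subseteq> Rplus n}"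

definition fvar :: "root \<Rightarrow> poly" where
  "fvar \<beta> = Poly_Mapping.single (Poly_Mapping.single \<beta> 1) 1"

definition fmon :: "mono \<Rightarrow> poly" where
  "fmon t = Poly_Mapping.single t 1"

definition const_poly :: "complex \<Rightarrow> poly" where
  "const_poly c = Poly_Mapping.single 0 c"

definition mpderiv :: "root \<Rightarrow> poly \<Rightarrow> poly" where
  "mpderiv \<beta> p = (\<Sum>m \<in> Poly_Mapping.keys p.
      Poly_Mapping.single (m - Poly_Mapping.single \<beta> 1)
        (Poly_Mapping.lookup p m * of_nat (Poly_Mapping.lookup m \<beta>)))"

text \<open>Adjoint action of e_alpha on f_beta in sl_n / (n^+ + h), with the Chevalley
  basis e_{alpha_{i,j}} = E_{i,j+1}, f_{alpha_{k,l}} = E_{l+1,k}: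
  [E_{i,j+1}, E_{l+1,k}] = delta_{j,l} E_{i,k} - delta_{i,k} E_{l+1,j+1},
  and only strictly lower triangular parts survive the projection.\<close>
definition e_on_f :: "root \<Rightarrow> root \<Rightarrow> poly" where
  "e_on_f \<alpha> \<beta> = (case \<alpha> of (i, j) \<Rightarrow> case \<beta> of (k, l) \<Rightarrow>
      if j = l \<and> k < i then fvar (k, i - 1)
      else if i = k \<and> j < l then - fvar (j + 1, l)
      else 0)"

definition eact :: "nat \<Rightarrow> root \<Rightarrow> poly \<Rightarrow> poly" where
  "eact n \<alpha> p = (\<Sum>\<beta> \<in> Rplus n. e_on_f \<alpha> \<beta> * mpderiv \<beta> p)"

text \<open>U(n^+) o f_alpha^(a_alpha+1) is the span of all iterated applications of
  root vectors e_gamma to f_alpha^(a_alpha+1); Igen collects these iterates.\<close>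
inductive_set Igen :: "nat \<Rightarrow> (root \<Rightarrow> nat) \<Rightarrow> poly set" for n a where
  base: "\<alpha> \<in> Rplus n \<Longrightarrow> fvar \<alpha> ^ (a \<alpha> + 1) \<in> Igen n a"
| step: "\<gamma> \<in> Rplus n \<Longrightarrow> g \<in> Igen n a \<Longrightarrow> eact n \<gamma> g \<in> Igen n a"

definition ideal_gen :: "nat \<Rightarrow> poly set \<Rightarrow> poly set" where
  "ideal_gen n G = {(\<Sum>g \<in> F. q g * g) | F q. finite F \<and> F \<subseteq> G \<and> (\<forall>g \<in> F. q g \<in> Sn n)}"

definition Ia :: "nat \<Rightarrow> (root \<Rightarrow> nat) \<Rightarrow> poly set" where
  "Ia n a = ideal_gen n (Igen n a)"

definition dyck_path :: "nat \<Rightarrow> root list \<Rightarrow> bool" where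
  "dyck_path n p \<longleftrightarrow> p \<noteq> [] \<and> set p \<subseteq> Rplus n \<and>
     (\<forall>i. Suc i < length p \<longrightarrow>
        (p ! Suc i = (fst (p ! i) + 1, snd (p ! i)) \<or> p ! Suc i = (fst (p ! i), snd (p ! i) + 1)))"

definition base_root :: "root list \<Rightarrow> root" where
  "base_root p = (fst (hd p), snd (last p))"

text \<open>S(a): nonnegative integer points of the polytope P(a), indexed by positive roots.\<close>
definition Sa :: "nat \<Rightarrow> (root \<Rightarrow> nat) \<Rightarrow> mono set" where
  "Sa n a = {s. Poly_Mapping.keys s \<subseteq> Rplus n \<and>
     (\<forall>p. dyck_path n p \<longrightarrow> (\<Sum>\<alpha>\<leftarrow>p. Poly_Mapping.lookup s \<alpha>) \<le> a (base_root p))}"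

end

(*
  Induction on monomials in lexicographic order. If f^m is not one of the f^s, s in S(a), then
  m violates the inequality of some Dyck path with base root alpha_(i,j), so m dominates a
  monomial f^s with total degree a_(i,j) + 1 supported on that path. Starting from
  f_(i,j)^(a_(i,j)+1), which lies in I(a), the root vectors e_(r+1,j) and e_(i,r) move single
  units of exponent inside the triangle of roots alpha_(k,l), i <= k <= l <= j, from column j to
  column r and from row i to row r+1. Applied as often as the column and row sums of s
  prescribe, they yield an element R of I(a) all of whose monomials have the row and column
  sums of s. Since the support of s is a chain, s is the lexicographically largest such
  monomial, and it does occur in R because all coefficients of R have the same sign. Hence
  f^(m-s) R in I(a) expresses f^m through lexicographically smaller monomials.
*)

theory Submission
  imports Defs "HOL-Library.Product_Lexorder" "HOL-Library.Complex_Order"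
begin

abbreviation (input) lookup where "lookup \<equiv> Poly_Mapping.lookup"
abbreviation (input) keys where "keys \<equiv> Poly_Mapping.keys"

lemma lookup_const_poly_mult: "lookup (const_poly c * p) m = c * lookup p m"
  unfolding const_poly_def mult_map_scale_conv_mult[symmetric]
  by (simp add: Poly_Mapping.map.rep_eq when_def)

lemma const_poly_mult_single: "const_poly c * Poly_Mapping.single k v = Poly_Mapping.single k (c * v)"
  unfolding const_poly_def by (simp add: mult_single)

lemma const_poly_mult_const_poly: "const_poly c * const_poly d = const_poly (c * d)"
  unfolding const_poly_def by (simp add: mult_single)

lemma const_poly_1 [simp]: "const_poly 1 = 1" and const_poly_0 [simp]: "const_poly 0 = 0"
  unfolding const_poly_def by simp_all

lemma keys_const_poly_mult: "c \<noteq> 0 \<Longrightarrow> keys (const_poly c * p) = keys p"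
  by (auto simp: in_keys_iff lookup_const_poly_mult)

lemma poly_eq_sum_fmon: "p = (\<Sum>m\<in>keys p. const_poly (lookup p m) * fmon m)"
proof (rule poly_mapping_eqI)
  fix k
  have "lookup (\<Sum>m\<in>keys p. const_poly (lookup p m) * fmon m) k = (\<Sum>m\<in>keys p. lookup p m when m = k)"
    by (simp add: lookup_sum fmon_def const_poly_mult_single lookup_single)
  also have "\<dots> = lookup p k"
    by (cases "k \<in> keys p") (auto simp: when_def in_keys_iff)
  finally show "lookup p k = lookup (\<Sum>m\<in>keys p. const_poly (lookup p m) * fmon m) k" by simp
qed

lemma fmon_mult: "fmon s * fmon t = fmon (s + t)"
  unfolding fmon_def by (simp add: mult_single)

lemma keys_fmon [simp]: "keys (fmon m) = {m}"
  unfolding fmon_def by simp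

lemma fvar_power: "fvar \<beta> ^ k = fmon (Poly_Mapping.single \<beta> k)"
  by (induction k) (simp_all add: fvar_def fmon_def mult_single single_add[symmetric])

lemma mpderiv_const_poly_mult: "mpderiv \<beta> (const_poly c * p) = const_poly c * mpderiv \<beta> p"
proof (cases "c = 0")
  case False
  show ?thesis unfolding mpderiv_def keys_const_poly_mult[OF False]
    by (simp add: sum_distrib_left const_poly_mult_single lookup_const_poly_mult mult.assoc)
qed (simp add: mpderiv_def)

lemma finite_Rplus: "finite (Rplus n)"
  by (rule finite_subset[of _ "{0..n} \<times> {0..n}"]) (auto simp: Rplus_def)

definition nonneg_poly :: "poly \<Rightarrow> bool" where
  "nonneg_poly q \<longleftrightarrow> (\<forall>m. 0 \<le> lookup q m)"

lemma nonneg_poly_sum: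
  assumes "finite I" "\<And>i. i \<in> I \<Longrightarrow> nonneg_poly (f i)"
  shows "nonneg_poly (sum f I) \<and> keys (sum f I) = (\<Union>i\<in>I. keys (f i))"
  using assms
proof (induction I rule: finite_induct)
  case (insert i I)
  then have "nonneg_poly (f i)" "nonneg_poly (sum f I)" by simp_all
  then have "keys (f i + sum f I) = keys (f i) \<union> keys (sum f I)"
    by (auto simp: nonneg_poly_def in_keys_iff lookup_add add_nonneg_eq_0_iff)
  with insert show ?case by (auto simp: nonneg_poly_def lookup_add)
qed (simp add: nonneg_poly_def)

definition sign_definite :: "poly \<Rightarrow> bool" where
  "sign_definite q \<longleftrightarrow> (\<exists>\<tau>. \<tau> \<noteq> 0 \<and> nonneg_poly (const_poly \<tau> * q))"

lemma sign_definite_fmon: "sign_definite (fmon m)"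
  unfolding sign_definite_def nonneg_poly_def
  by (rule exI[of _ 1]) (simp add: fmon_def lookup_single when_def less_eq_complex_def)

definition mono_move :: "mono \<Rightarrow> root \<Rightarrow> root \<Rightarrow> mono" where
  "mono_move x \<beta> \<gamma> = x - Poly_Mapping.single \<beta> 1 + Poly_Mapping.single \<gamma> 1"

lemma keys_mono_move: "keys (mono_move x \<beta> \<gamma>) \<subseteq> keys x \<union> {\<gamma>}"
  by (auto simp: mono_move_def in_keys_iff lookup_add lookup_minus lookup_single when_def split: if_splits)

lemma fvar_mult_mpderiv:
  "fvar \<gamma> * mpderiv \<beta> q = (\<Sum>x\<in>keys q.
     Poly_Mapping.single (mono_move x \<beta> \<gamma>) (lookup q x * of_nat (lookup x \<beta>)))"
  unfolding mpderiv_def fvar_def sum_distrib_left mono_move_def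
  by (simp add: mult_single add.commute)

lemma eact_restrict:
  assumes "R \<subseteq> Rplus n" "\<forall>x\<in>keys q. keys x \<subseteq> R"
  shows "eact n \<gamma> q = (\<Sum>\<beta>\<in>R. e_on_f \<gamma> \<beta> * mpderiv \<beta> q)"
  unfolding eact_def
proof (rule sum.mono_neutral_right[OF finite_Rplus assms(1)], intro ballI)
  fix \<beta> assume "\<beta> \<in> Rplus n - R"
  then have "lookup x \<beta> = 0" if "x \<in> keys q" for x
    using assms(2) that by (metis DiffD2 in_keys_iff subsetD)
  then have "mpderiv \<beta> q = 0"
    unfolding mpderiv_def by (intro sum.neutral) simp
  then show "e_on_f \<gamma> \<beta> * mpderiv \<beta> q = 0" by simp
qed

text \<open>Since all coefficients of \<open>e\<^sub>\<gamma> \<circ> q\<close> lie on one ray, no two terms cancel; so its monomials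
  are exactly those obtained from monomials of \<open>q\<close> by moving one unit of exponent from \<open>\<beta>\<close>
  to \<open>g \<beta>\<close>.\<close>
lemma eact_move:
  assumes R: "R \<subseteq> Rplus n" "finite R" and "\<sigma> \<noteq> 0"
    and q: "sign_definite q" "\<forall>x\<in>keys q. keys x \<subseteq> R"
    and e: "\<And>\<beta>. \<beta> \<in> R \<Longrightarrow> e_on_f \<gamma> \<beta> = (if P \<beta> then const_poly \<sigma> * fvar (g \<beta>) else 0)"
  shows "sign_definite (eact n \<gamma> q) \<and>
    keys (eact n \<gamma> q) = {mono_move x \<beta> (g \<beta>) | x \<beta>. x \<in> keys q \<and> \<beta> \<in> R \<and> P \<beta> \<and> 0 < lookup x \<beta>}"
proof -
  obtain \<tau> where "\<tau> \<noteq> 0" and nn: "nonneg_poly (const_poly \<tau> * q)"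
    using q(1) sign_definite_def by blast
  define q' where "q' = const_poly \<tau> * q"
  have kq': "keys q' = keys q" using \<open>\<tau> \<noteq> 0\<close> by (simp add: q'_def keys_const_poly_mult)
  define T where "T \<beta> x = Poly_Mapping.single (mono_move x \<beta> (g \<beta>)) (lookup q' x * of_nat (lookup x \<beta>))"
    for \<beta> x
  have "const_poly (\<tau> / \<sigma>) * (e_on_f \<gamma> \<beta> * mpderiv \<beta> q) =
      (if P \<beta> then \<Sum>x\<in>keys q. T \<beta> x else 0)" if "\<beta> \<in> R" for \<beta>
    using e[OF that] \<open>\<sigma> \<noteq> 0\<close>
    by (simp add: T_def q'_def kq'[symmetric] fvar_mult_mpderiv[symmetric] mpderiv_const_poly_mult
        const_poly_mult_const_poly mult.left_commute)
  then have E: "const_poly (\<tau> / \<sigma>) * eact n \<gamma> q = (\<Sum>\<beta>\<in>{\<beta>\<in>R. P \<beta>}. \<Sum>x\<in>keys q. T \<beta> x)"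
    unfolding eact_restrict[OF R(1) q(2)] sum_distrib_left
    by (simp add: sum.inter_filter R(2))
  have nnT: "nonneg_poly (T \<beta> x)" for \<beta> x
    using nn by (simp add: T_def q'_def nonneg_poly_def lookup_single when_def mult_nonneg_nonneg
        less_eq_complex_def)
  have kT: "keys (T \<beta> x) = (if 0 < lookup x \<beta> then {mono_move x \<beta> (g \<beta>)} else {})"
    if "x \<in> keys q" for \<beta> x
    using that kq' by (auto simp: T_def in_keys_iff)
  have inner: "nonneg_poly (\<Sum>x\<in>keys q. T \<beta> x) \<and> keys (\<Sum>x\<in>keys q. T \<beta> x) = (\<Union>x\<in>keys q. keys (T \<beta> x))"
    for \<beta> by (rule nonneg_poly_sum) (simp_all add: nnT)
  have outer: "nonneg_poly (const_poly (\<tau> / \<sigma>) * eact n \<gamma> q) \<and>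
      keys (const_poly (\<tau> / \<sigma>) * eact n \<gamma> q) = (\<Union>\<beta>\<in>{\<beta>\<in>R. P \<beta>}. \<Union>x\<in>keys q. keys (T \<beta> x))"
    unfolding E using inner nonneg_poly_sum[of "{\<beta>\<in>R. P \<beta>}" "\<lambda>\<beta>. \<Sum>x\<in>keys q. T \<beta> x"] R(2)
    by simp
  have "\<tau> / \<sigma> \<noteq> 0" using \<open>\<tau> \<noteq> 0\<close> \<open>\<sigma> \<noteq> 0\<close> by simp
  with outer have "sign_definite (eact n \<gamma> q)" unfolding sign_definite_def by blast
  moreover have "keys (eact n \<gamma> q) = (\<Union>\<beta>\<in>{\<beta>\<in>R. P \<beta>}. \<Union>x\<in>keys q. keys (T \<beta> x))"
    using outer keys_const_poly_mult[OF \<open>\<tau> / \<sigma> \<noteq> 0\<close>] by simp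
  ultimately show ?thesis using kT by (auto split: if_splits)
qed

text \<open>The roots \<open>\<alpha>\<^sub>k\<^sub>,\<^sub>l\<close> with \<open>i \<le> k \<le> l \<le> j\<close> form a triangular array with rows indexed by
  \<open>k\<close> and columns by \<open>l\<close>; all moves below take place inside it.\<close>
definition subroots :: "nat \<Rightarrow> nat \<Rightarrow> root set" where
  "subroots i j = {(k, l). i \<le> k \<and> k \<le> l \<and> l \<le> j}"

lemma finite_subroots: "finite (subroots i j)"
  by (rule finite_subset[of _ "{0..j} \<times> {0..j}"]) (auto simp: subroots_def)

lemma subroots_subset_Rplus: "1 \<le> i \<Longrightarrow> j \<le> n - 1 \<Longrightarrow> subroots i j \<subseteq> Rplus n"
  by (auto simp: subroots_def Rplus_def)

definition row_sum :: "nat \<Rightarrow> nat \<Rightarrow> mono \<Rightarrow> nat \<Rightarrow> nat" where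
  "row_sum i j x k = (\<Sum>c\<in>{c\<in>subroots i j. fst c = k}. lookup x c)"

definition col_sum :: "nat \<Rightarrow> nat \<Rightarrow> mono \<Rightarrow> nat \<Rightarrow> nat" where
  "col_sum i j x l = (\<Sum>c\<in>{c\<in>subroots i j. snd c = l}. lookup x c)"

definition total :: "nat \<Rightarrow> nat \<Rightarrow> mono \<Rightarrow> nat" where
  "total i j x = (\<Sum>c\<in>subroots i j. lookup x c)"

lemma finite_subroots_filter [simp]: "finite {c \<in> subroots i j. P c}"
  using finite_subroots by simp

lemma sum_lookup_mono_move:
  assumes "finite A" "0 < lookup x \<beta>"
  shows "(\<Sum>c\<in>A. lookup (mono_move x \<beta> \<gamma>) c) + of_bool (\<beta> \<in> A) = (\<Sum>c\<in>A. lookup x c) + of_bool (\<gamma> \<in> A)"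
proof -
  have "lookup (mono_move x \<beta> \<gamma>) c + (if \<beta> = c then 1 else 0) = lookup x c + (if \<gamma> = c then 1 else 0)" for c
    using assms(2) by (auto simp: mono_move_def lookup_add lookup_minus lookup_single when_def)
  then have "(\<Sum>c\<in>A. lookup (mono_move x \<beta> \<gamma>) c + (if \<beta> = c then 1 else 0)) =
      (\<Sum>c\<in>A. lookup x c + (if \<gamma> = c then 1 else 0))"
    by simp
  then show ?thesis using assms(1) by (simp only: sum.distrib sum.delta'[OF assms(1)] of_bool_def)
qed

text \<open>On \<open>f\<^sub>i\<^sub>,\<^sub>j\<^sup>N\<close>, the operator \<open>e\<^sub>i\<^sub>,\<^sub>m\<close> moves a unit from row \<open>i\<close> to row \<open>m+1\<close> and
  \<open>e\<^sub>m\<^sub>+\<^sub>1\<^sub>,\<^sub>j\<close> moves one from column \<open>j\<close> to column \<open>m\<close>; so after applying a word \<open>os\<close>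
  these row and column sums are the letter counts of \<open>os\<close>.\<close>
definition balanced :: "nat \<Rightarrow> nat \<Rightarrow> nat \<Rightarrow> root list \<Rightarrow> mono \<Rightarrow> bool" where
  "balanced i j N os x \<longleftrightarrow> keys x \<subseteq> subroots i j \<and>
     (\<forall>m. i \<le> m \<and> m < j \<longrightarrow>
        row_sum i j x (m + 1) = count_list os (i, m) \<and> col_sum i j x m = count_list os (m + 1, j)) \<and>
     total i j x = N"

lemma balanced_fvar_power: "i \<le> j \<Longrightarrow> balanced i j N [] (Poly_Mapping.single (i, j) N)"
  by (simp add: balanced_def row_sum_def col_sum_def total_def lookup_single when_def finite_subroots
      sum.delta) (auto simp: subroots_def)

lemma count_list_Cons': "count_list (y # ys) a = count_list ys a + of_bool (y = a)"
  by simp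

lemma balanced_mono_move:
  assumes bal: "balanced i j N os x" and pos: "0 < lookup x \<beta>"
    and \<beta>\<gamma>: "\<beta> \<in> subroots i j" "\<gamma> \<in> subroots i j"
    and rows: "\<And>m. i \<le> m \<Longrightarrow> m < j \<Longrightarrow>
      of_bool (fst \<beta> = m + 1) + of_bool (op = (i, m)) = (of_bool (fst \<gamma> = m + 1) :: nat)"
    and cols: "\<And>m. i \<le> m \<Longrightarrow> m < j \<Longrightarrow>
      of_bool (snd \<beta> = m) + of_bool (op = (m + 1, j)) = (of_bool (snd \<gamma> = m) :: nat)"
  shows "balanced i j N (op # os) (mono_move x \<beta> \<gamma>)"
proof -
  let ?x = "mono_move x \<beta> \<gamma>"
  have move: "(\<Sum>c\<in>A. lookup ?x c) + of_bool (\<beta> \<in> A) = (\<Sum>c\<in>A. lookup x c) + of_bool (\<gamma> \<in> A)"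
    if "A \<subseteq> subroots i j" for A
    using sum_lookup_mono_move[OF finite_subset[OF that finite_subroots] pos] .
  have row: "row_sum i j ?x k + of_bool (fst \<beta> = k) = row_sum i j x k + of_bool (fst \<gamma> = k)" for k
    using move[of "{c\<in>subroots i j. fst c = k}"] \<beta>\<gamma> by (simp add: row_sum_def)
  have col: "col_sum i j ?x l + of_bool (snd \<beta> = l) = col_sum i j x l + of_bool (snd \<gamma> = l)" for l
    using move[of "{c\<in>subroots i j. snd c = l}"] \<beta>\<gamma> by (simp add: col_sum_def)
  have "row_sum i j ?x (m + 1) = count_list (op # os) (i, m) \<and>
      col_sum i j ?x m = count_list (op # os) (m + 1, j)" if "i \<le> m" "m < j" for m
  proof -
    have "row_sum i j x (m + 1) = count_list os (i, m)" "col_sum i j x m = count_list os (m + 1, j)"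
      using bal that by (simp_all add: balanced_def)
    then show ?thesis
      using row[of "m + 1"] col[of m] rows[OF that] cols[OF that]
        count_list_Cons'[of op os "(i, m)"] count_list_Cons'[of op os "(m + 1, j)"] by linarith
  qed
  moreover have "total i j ?x = total i j x"
    using move[of "subroots i j"] \<beta>\<gamma> by (simp add: total_def)
  moreover have "keys ?x \<subseteq> subroots i j"
    using keys_mono_move[of x \<beta> \<gamma>] bal \<beta>\<gamma> by (auto simp: balanced_def)
  ultimately show ?thesis using bal unfolding balanced_def by blast
qed

lemma const_poly_uminus_mult: "const_poly (- c) * p = - (const_poly c * p)"
  by (rule poly_mapping_eqI) (simp add: lookup_const_poly_mult)

lemma eact_row_op:
  assumes q: "sign_definite q" "\<forall>x\<in>keys q. keys x \<subseteq> subroots i j"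
    and ij: "1 \<le> i" "j \<le> n - 1" and "i \<le> m"
  shows "sign_definite (eact n (i, m) q) \<and>
    keys (eact n (i, m) q) = {mono_move x (i, l) (m + 1, l) | x l. x \<in> keys q \<and> m < l \<and> l \<le> j \<and> 0 < lookup x (i, l)}"
proof -
  have e: "e_on_f (i, m) \<beta> = (if fst \<beta> = i \<and> m < snd \<beta> then const_poly (-1) * fvar (m + 1, snd \<beta>) else 0)"
    if "\<beta> \<in> subroots i j" for \<beta>
    using that by (auto simp: subroots_def e_on_f_def const_poly_uminus_mult)
  have "{mono_move x \<beta> (m + 1, snd \<beta>) | x \<beta>. x \<in> keys q \<and> \<beta> \<in> subroots i j \<and> (fst \<beta> = i \<and> m < snd \<beta>) \<and> 0 < lookup x \<beta>}
      = {mono_move x (i, l) (m + 1, l) | x l. x \<in> keys q \<and> m < l \<and> l \<le> j \<and> 0 < lookup x (i, l)}"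
    using \<open>i \<le> m\<close> unfolding subroots_def by safe force+
  with eact_move[OF subroots_subset_Rplus[OF ij] finite_subroots _ q e] show ?thesis by simp
qed

lemma eact_col_op:
  assumes q: "sign_definite q" "\<forall>x\<in>keys q. keys x \<subseteq> subroots i j"
    and ij: "1 \<le> i" "j \<le> n - 1" and "m < j"
  shows "sign_definite (eact n (m + 1, j) q) \<and>
    keys (eact n (m + 1, j) q) = {mono_move x (k, j) (k, m) | x k. x \<in> keys q \<and> i \<le> k \<and> k \<le> m \<and> 0 < lookup x (k, j)}"
proof -
  have e: "e_on_f (m + 1, j) \<beta> = (if snd \<beta> = j \<and> fst \<beta> \<le> m then const_poly 1 * fvar (fst \<beta>, m) else 0)"
    if "\<beta> \<in> subroots i j" for \<beta>
    using that by (auto simp: subroots_def e_on_f_def)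
  have "{mono_move x \<beta> (fst \<beta>, m) | x \<beta>. x \<in> keys q \<and> \<beta> \<in> subroots i j \<and> (snd \<beta> = j \<and> fst \<beta> \<le> m) \<and> 0 < lookup x \<beta>}
      = {mono_move x (k, j) (k, m) | x k. x \<in> keys q \<and> i \<le> k \<and> k \<le> m \<and> 0 < lookup x (k, j)}"
    using \<open>m < j\<close> unfolding subroots_def by safe force+
  with eact_move[OF subroots_subset_Rplus[OF ij] finite_subroots _ q e] show ?thesis by simp
qed

definition admissible_op :: "nat \<Rightarrow> nat \<Rightarrow> root \<Rightarrow> bool" where
  "admissible_op i j \<gamma> \<longleftrightarrow> (\<exists>m. i \<le> m \<and> m < j \<and> (\<gamma> = (i, m) \<or> \<gamma> = (m + 1, j)))"

lemma foldr_eact_balanced: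
  assumes ij: "1 \<le> i" "j \<le> n - 1" "i \<le> j" and os: "\<forall>\<gamma>\<in>set os. admissible_op i j \<gamma>"
  shows "sign_definite (foldr (eact n) os (fvar (i, j) ^ N)) \<and>
    (\<forall>x\<in>keys (foldr (eact n) os (fvar (i, j) ^ N)). balanced i j N os x)"
  using os
proof (induction os)
  case Nil
  then show ?case using balanced_fvar_power[OF ij(3)] by (simp add: fvar_power sign_definite_fmon)
next
  case (Cons \<gamma> os)
  let ?q = "foldr (eact n) os (fvar (i, j) ^ N)"
  have IH: "sign_definite ?q" "\<forall>x\<in>keys ?q. balanced i j N os x" using Cons by simp_all
  then have kq: "\<forall>x\<in>keys ?q. keys x \<subseteq> subroots i j" by (simp add: balanced_def)
  obtain m where m: "i \<le> m" "m < j" and "\<gamma> = (i, m) \<or> \<gamma> = (m + 1, j)"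
    using Cons.prems admissible_op_def by auto
  then consider (row) "\<gamma> = (i, m)" | (col) "\<gamma> = (m + 1, j)" by blast
  then show ?case
  proof cases
    case row
    note S = eact_row_op[OF IH(1) kq ij(1,2) m(1)]
    have "balanced i j N (\<gamma> # os) y" if y_in: "y \<in> keys (eact n \<gamma> ?q)" for y
    proof -
      obtain x l where x: "x \<in> keys ?q" "m < l" "l \<le> j" "0 < lookup x (i, l)"
        and y: "y = mono_move x (i, l) (m + 1, l)"
        using y_in S row by blast
      show ?thesis unfolding y row
        by (rule balanced_mono_move[OF IH(2)[rule_format, OF x(1)] x(4)])
          (use m x in \<open>auto simp: subroots_def\<close>)
    qed
    with S row show ?thesis by simp
  next
    case col
    note S = eact_col_op[OF IH(1) kq ij(1,2) m(2)]
    have "balanced i j N (\<gamma> # os) y" if y_in: "y \<in> keys (eact n \<gamma> ?q)" for y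
    proof -
      obtain x k where x: "x \<in> keys ?q" "i \<le> k" "k \<le> m" "0 < lookup x (k, j)"
        and y: "y = mono_move x (k, j) (k, m)"
        using y_in S col by blast
      show ?thesis unfolding y col
        by (rule balanced_mono_move[OF IH(2)[rule_format, OF x(1)] x(4)])
          (use m x in \<open>auto simp: subroots_def\<close>)
    qed
    with S col show ?thesis by simp
  qed
qed

lemma lookup_eq_0_outside: "keys x \<subseteq> A \<Longrightarrow> c \<notin> A \<Longrightarrow> lookup x c = 0"
  by (auto simp: in_keys_iff)

definition mono_less :: "nat \<Rightarrow> mono \<Rightarrow> mono \<Rightarrow> bool" where
  "mono_less n x y \<longleftrightarrow> (\<exists>c\<in>Rplus n. lookup x c < lookup y c \<and>
     (\<forall>c'\<in>Rplus n. c' < c \<longrightarrow> lookup x c' = lookup y c'))"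

lemma mono_less_add: "mono_less n x y \<Longrightarrow> mono_less n (u + x) (u + y)"
  unfolding mono_less_def by (auto simp: lookup_add)

lemma mono_less_imp_lex:
  assumes "mono_less n x y"
  shows "(map (lookup x) (sorted_list_of_set (Rplus n)), map (lookup y) (sorted_list_of_set (Rplus n)))
    \<in> lex less_than"
proof -
  let ?L = "sorted_list_of_set (Rplus n)"
  obtain c where c: "c \<in> Rplus n" "lookup x c < lookup y c"
    and eq: "\<forall>c'\<in>Rplus n. c' < c \<longrightarrow> lookup x c' = lookup y c'"
    using assms mono_less_def by blast
  have L: "set ?L = Rplus n" "sorted_wrt (<) ?L"
    using finite_Rplus by (simp_all add: strict_sorted_list_of_set)
  obtain t where t: "t < length ?L" "?L ! t = c" using c(1) L(1) by (metis in_set_conv_nth)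
  have "take t (map (lookup x) ?L) = take t (map (lookup y) ?L)"
  proof (rule nth_equalityI)
    fix t' assume "t' < length (take t (map (lookup x) ?L))"
    then have t': "t' < t" using t by simp
    then have "?L ! t' < c" "?L ! t' \<in> Rplus n"
      using L t by (metis sorted_wrt_nth_less, metis nth_mem order.strict_trans)
    then show "take t (map (lookup x) ?L) ! t' = take t (map (lookup y) ?L) ! t'"
      using eq t' t by simp
  qed simp
  then have "(map (lookup x) ?L, map (lookup y) ?L) \<in> lexord less_than"
    unfolding lexord_take_index_conv using t c(2) by (auto intro!: exI[of _ t])
  then show ?thesis by (simp add: lexord_lex)
qed

lemma wf_mono_less: "wf {(x, y). mono_less n x y}"
proof (rule wf_subset)
  show "wf (inv_image (lex less_than) (\<lambda>x. map (lookup x) (sorted_list_of_set (Rplus n))))"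
    by (intro wf_inv_image wf_lex wf_less_than)
qed (auto dest: mono_less_imp_lex)

lemma total_eq_row_sums:
  assumes "i \<le> j"
  shows "total i j x = row_sum i j x i + (\<Sum>m\<in>{i..<j}. row_sum i j x (m + 1))"
proof -
  have "total i j x = (\<Sum>k\<in>{i..<Suc j}. row_sum i j x k)"
    unfolding total_def row_sum_def
    by (rule sum.group[symmetric, OF finite_subroots]) (auto simp: subroots_def)
  also have "\<dots> = row_sum i j x i + (\<Sum>k\<in>{Suc i..<Suc j}. row_sum i j x k)"
    using assms by (simp only: sum.atLeast_Suc_lessThan[OF le_imp_less_Suc])
  also have "\<dots> = row_sum i j x i + (\<Sum>m\<in>{i..<j}. row_sum i j x (m + 1))"
    by (simp only: sum.shift_bounds_Suc_ivl flip: Suc_eq_plus1)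
  finally show ?thesis .
qed

lemma total_eq_col_sums:
  assumes "i \<le> j"
  shows "total i j x = col_sum i j x j + (\<Sum>m\<in>{i..<j}. col_sum i j x m)"
proof -
  have "total i j x = (\<Sum>l\<in>{i..j}. col_sum i j x l)"
    unfolding total_def col_sum_def
    by (rule sum.group[symmetric, OF finite_subroots]) (auto simp: subroots_def)
  also have "{i..j} = insert j {i..<j}" using assms by auto
  finally show ?thesis by simp
qed

definition same_margins :: "nat \<Rightarrow> nat \<Rightarrow> mono \<Rightarrow> mono \<Rightarrow> bool" where
  "same_margins i j s x \<longleftrightarrow> keys x \<subseteq> subroots i j \<and>
     (\<forall>k. row_sum i j x k = row_sum i j s k) \<and> (\<forall>l. col_sum i j x l = col_sum i j s l)"

lemma row_sum_outside: "\<not> (i \<le> k \<and> k \<le> j) \<Longrightarrow> row_sum i j x k = 0"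
  unfolding row_sum_def subroots_def by (rule sum.neutral) auto

lemma col_sum_outside: "\<not> (i \<le> l \<and> l \<le> j) \<Longrightarrow> col_sum i j x l = 0"
  unfolding col_sum_def subroots_def by (rule sum.neutral) auto

text \<open>The row sum of row \<open>i\<close> and the column sum of column \<open>j\<close> are determined by the others
  and the total.\<close>
lemma balanced_same_margins:
  assumes "i \<le> j" and bal: "balanced i j (total i j s) os x"
    and os: "\<And>m. i \<le> m \<Longrightarrow> m < j \<Longrightarrow>
      count_list os (i, m) = row_sum i j s (m + 1) \<and> count_list os (m + 1, j) = col_sum i j s m"
  shows "same_margins i j s x"
proof -
  have rc: "row_sum i j x (m + 1) = row_sum i j s (m + 1) \<and> col_sum i j x m = col_sum i j s m"
    if "i \<le> m" "m < j" for m
    using bal os[OF that] that by (simp add: balanced_def)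
  then have "(\<Sum>m\<in>{i..<j}. row_sum i j x (m + 1)) = (\<Sum>m\<in>{i..<j}. row_sum i j s (m + 1))"
    and "(\<Sum>m\<in>{i..<j}. col_sum i j x m) = (\<Sum>m\<in>{i..<j}. col_sum i j s m)"
    by (auto intro: sum.cong)
  moreover have "total i j x = total i j s" using bal by (simp add: balanced_def)
  ultimately have "row_sum i j x i = row_sum i j s i" "col_sum i j x j = col_sum i j s j"
    using total_eq_row_sums[OF \<open>i \<le> j\<close>] total_eq_col_sums[OF \<open>i \<le> j\<close>] by (metis add_right_cancel)+
  then have "row_sum i j x k = row_sum i j s k" "col_sum i j x k = col_sum i j s k" for k
    using rc[of "k - 1"] rc[of k] row_sum_outside[of i k j] col_sum_outside[of i k j]
    by (cases "i < k \<and> k \<le> j"; cases "i \<le> k \<and> k < j"; force)+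
  with bal show ?thesis unfolding same_margins_def balanced_def by blast
qed

lemma le_of_sum_eq:
  fixes f g :: "'a \<Rightarrow> nat"
  assumes "finite A" "c \<in> A" "sum f A = sum g A" "\<And>a. a \<in> A \<Longrightarrow> a \<noteq> c \<Longrightarrow> g a \<le> f a"
  shows "f c \<le> g c"
proof -
  have "sum g (A - {c}) \<le> sum f (A - {c})" using assms(4) by (intro sum_mono) auto
  then show ?thesis using assms(3) sum.remove[OF assms(1,2), of f] sum.remove[OF assms(1,2), of g] by simp
qed

definition chain_supported :: "mono \<Rightarrow> bool" where
  "chain_supported s \<longleftrightarrow> (\<forall>c1\<in>keys s. \<forall>c2\<in>keys s.
     (fst c1 \<le> fst c2 \<and> snd c1 \<le> snd c2) \<or> (fst c2 \<le> fst c1 \<and> snd c2 \<le> snd c1))"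

text \<open>At the first cell \<open>c\<close> where \<open>x\<close> and \<open>s\<close> differ, the chain condition leaves \<open>s\<close> empty
  either to the right of \<open>c\<close> in its row or below \<open>c\<close> in its column; comparing that row or
  column sum bounds \<open>x c\<close> by \<open>s c\<close>.\<close>
lemma same_margins_chain_first_difference:
  assumes x: "same_margins i j s x" and s: "chain_supported s" and c: "c \<in> subroots i j"
    and before: "\<And>c'. c' < c \<Longrightarrow> lookup x c' = lookup s c'"
  shows "lookup x c \<le> lookup s c"
proof -
  obtain k l where kl: "c = (k, l)" by (cases c)
  have "(\<forall>c'\<in>subroots i j. fst c' = k \<and> l < snd c' \<longrightarrow> lookup s c' = 0) \<or>
     (\<forall>c'\<in>subroots i j. snd c' = l \<and> k < fst c' \<longrightarrow> lookup s c' = 0)"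
  proof (rule ccontr)
    assume "\<not> ?thesis"
    then obtain c1 c2 where "c1 \<in> keys s" "fst c1 = k" "l < snd c1" "c2 \<in> keys s" "snd c2 = l" "k < fst c2"
      by (auto simp: in_keys_iff)
    then show False using s unfolding chain_supported_def by fastforce
  qed
  then show ?thesis
  proof
    assume right: "\<forall>c'\<in>subroots i j. fst c' = k \<and> l < snd c' \<longrightarrow> lookup s c' = 0"
    show ?thesis
    proof (rule le_of_sum_eq[where A = "{c'\<in>subroots i j. fst c' = k}"])
      show "sum (lookup x) {c'\<in>subroots i j. fst c' = k} = sum (lookup s) {c'\<in>subroots i j. fst c' = k}"
        using x by (simp add: same_margins_def row_sum_def)
      fix c' assume "c' \<in> {c'\<in>subroots i j. fst c' = k}" "c' \<noteq> c"
      then show "lookup s c' \<le> lookup x c'"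
        using right before[of c'] kl by (cases "snd c' < l") (auto simp: less_prod_def' prod_eq_iff)
    qed (use c kl in auto)
  next
    assume below: "\<forall>c'\<in>subroots i j. snd c' = l \<and> k < fst c' \<longrightarrow> lookup s c' = 0"
    show ?thesis
    proof (rule le_of_sum_eq[where A = "{c'\<in>subroots i j. snd c' = l}"])
      show "sum (lookup x) {c'\<in>subroots i j. snd c' = l} = sum (lookup s) {c'\<in>subroots i j. snd c' = l}"
        using x by (simp add: same_margins_def col_sum_def)
      fix c' assume "c' \<in> {c'\<in>subroots i j. snd c' = l}" "c' \<noteq> c"
      then show "lookup s c' \<le> lookup x c'"
        using below before[of c'] kl by (cases "fst c' < k") (auto simp: less_prod_def' prod_eq_iff)
    qed (use c kl in auto)
  qed
qed

lemma same_margins_chain_imp_mono_less: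
  assumes x: "same_margins i j s x" and s: "keys s \<subseteq> subroots i j" "chain_supported s"
    and "subroots i j \<subseteq> Rplus n" "x \<noteq> s"
  shows "mono_less n x s"
proof -
  have kx: "keys x \<subseteq> subroots i j" using x same_margins_def by blast
  define D where "D = {c\<in>subroots i j. lookup x c \<noteq> lookup s c}"
  have "D \<noteq> {}"
  proof
    assume "D = {}"
    have "lookup x c = lookup s c" for c
    proof (cases "c \<in> subroots i j")
      case True
      then show ?thesis using \<open>D = {}\<close> unfolding D_def by blast
    next
      case False
      then show ?thesis using lookup_eq_0_outside[OF kx False] lookup_eq_0_outside[OF s(1) False] by simp
    qed
    then show False using \<open>x \<noteq> s\<close> poly_mapping_eqI by blast
  qed
  define c where "c = Min D"
  have "finite D" by (simp add: D_def)
  then have cD: "c \<in> D" and c_min: "\<And>c'. c' \<in> D \<Longrightarrow> c \<le> c'"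
    using \<open>D \<noteq> {}\<close> by (simp_all add: c_def)
  have before: "lookup x c' = lookup s c'" if "c' < c" for c'
  proof (cases "c' \<in> subroots i j")
    case True
    then show ?thesis using c_min[of c'] that unfolding D_def by force
  next
    case False
    then show ?thesis using lookup_eq_0_outside[OF kx False] lookup_eq_0_outside[OF s(1) False] by simp
  qed
  have "c \<in> subroots i j" using cD D_def by simp
  then have "lookup x c < lookup s c"
    using same_margins_chain_first_difference[OF x s(2) _ before] cD D_def by fastforce
  then show ?thesis
    unfolding mono_less_def using cD D_def before assms(4) by blast
qed

text \<open>The rows force equality off row \<open>i\<close>, and then the columns force it on row \<open>i\<close>.\<close>
lemma same_margins_eqI:
  assumes y: "same_margins i j s y" and s: "keys s \<subseteq> subroots i j"
    and le: "\<And>c. fst c \<noteq> i \<Longrightarrow> lookup y c \<le> lookup s c"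
  shows "y = s"
proof (rule poly_mapping_eqI)
  fix c
  have ky: "keys y \<subseteq> subroots i j" using y same_margins_def by blast
  have off_row: "lookup y c = lookup s c" if c: "c \<in> subroots i j" "fst c \<noteq> i" for c
  proof (rule antisym)
    show "lookup y c \<le> lookup s c" using le c(2) .
    show "lookup s c \<le> lookup y c"
    proof (rule le_of_sum_eq[where A = "{c'\<in>subroots i j. fst c' = fst c}"])
      show "sum (lookup s) {c'\<in>subroots i j. fst c' = fst c} = sum (lookup y) {c'\<in>subroots i j. fst c' = fst c}"
        using y by (simp add: same_margins_def row_sum_def)
    qed (use c le in auto)
  qed
  show "lookup y c = lookup s c"
  proof (cases "c \<in> subroots i j \<and> fst c = i")
    case True
    let ?C = "{c'\<in>subroots i j. snd c' = snd c}"
    have "sum (lookup y) ?C = sum (lookup s) ?C" using y by (simp add: same_margins_def col_sum_def)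
    moreover have "sum (lookup y) (?C - {c}) = sum (lookup s) (?C - {c})"
      using True off_row by (intro sum.cong) (auto simp: prod_eq_iff)
    ultimately show ?thesis
      using True sum.remove[of ?C c "lookup y"] sum.remove[of ?C c "lookup s"] by simp
  next
    case False
    show ?thesis
    proof (cases "c \<in> subroots i j")
      case True
      with False off_row show ?thesis by blast
    next
      case out: False
      then show ?thesis using lookup_eq_0_outside[OF ky out] lookup_eq_0_outside[OF s out] by simp
    qed
  qed
qed

lemma keys_fvar_power: "keys (fvar \<beta> ^ N) = {Poly_Mapping.single \<beta> N}"
  by (simp add: fvar_power)

lemma lookup_mono_move_other: "c \<noteq> \<beta> \<Longrightarrow> c \<noteq> \<gamma> \<Longrightarrow> lookup (mono_move x \<beta> \<gamma>) c = lookup x c"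
  by (simp add: mono_move_def lookup_add lookup_minus lookup_single)

lemma col_ops_witness:
  assumes ij: "1 \<le> i" "j \<le> n - 1" "i \<le> j"
    and Bs: "\<forall>\<gamma>\<in>set Bs. \<exists>m. i \<le> m \<and> m < j \<and> \<gamma> = (m + 1, j)" and "length Bs \<le> N"
  shows "\<exists>y\<in>keys (foldr (eact n) Bs (fvar (i, j) ^ N)).
    keys y \<subseteq> {c. fst c = i} \<and> lookup y (i, j) + length Bs = N"
  using assms(4,5)
proof (induction Bs)
  case Nil
  then show ?case by (simp add: keys_fvar_power)
next
  case (Cons \<gamma> Bs)
  let ?q = "foldr (eact n) Bs (fvar (i, j) ^ N)"
  obtain m where m: "i \<le> m" "m < j" "\<gamma> = (m + 1, j)" using Cons.prems(1) by auto
  obtain y where y: "y \<in> keys ?q" "keys y \<subseteq> {c. fst c = i}" "lookup y (i, j) + length Bs = N"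
    using Cons by auto
  have "\<forall>\<gamma>\<in>set Bs. admissible_op i j \<gamma>" using Cons.prems(1) by (auto simp: admissible_op_def)
  note q = foldr_eact_balanced[OF ij this, of N]
  have "\<forall>x\<in>keys ?q. keys x \<subseteq> subroots i j" using q by (simp add: balanced_def)
  note S = eact_col_op[OF q[THEN conjunct1] this ij(1,2) m(2)]
  have pos: "0 < lookup y (i, j)" using y(3) Cons.prems(2) by simp
  then have "mono_move y (i, j) (i, m) \<in> keys (foldr (eact n) (\<gamma> # Bs) (fvar (i, j) ^ N))"
    using S y(1) m by auto
  moreover have "keys (mono_move y (i, j) (i, m)) \<subseteq> {c. fst c = i}"
    using keys_mono_move[of y "(i, j)" "(i, m)"] y(2) by auto
  moreover have "lookup (mono_move y (i, j) (i, m)) (i, j) = lookup y (i, j) - 1"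
    using m by (simp add: mono_move_def lookup_add lookup_minus lookup_single)
  ultimately show ?case using y(3) pos by (intro bexI[of _ "mono_move y (i, j) (i, m)"]) auto
qed

lemma col_sum_split:
  assumes "(k, l) \<in> subroots i j"
  shows "col_sum i j x l = lookup x (k, l) + sum (lookup x) ({c\<in>subroots i j. snd c = l} - {(k, l)})"
  unfolding col_sum_def by (rule sum.remove) (use assms in auto)

lemma col_surplus_in_first_row:
  assumes "(i, l) \<in> subroots i j" "(k, l) \<in> subroots i j" "k \<noteq> i"
    and "\<forall>c. fst c \<noteq> i \<longrightarrow> lookup y c \<le> lookup s c" "lookup y (k, l) < lookup s (k, l)"
    and "col_sum i j s l \<le> col_sum i j y l"
  shows "lookup s (i, l) < lookup y (i, l)"
proof -
  let ?C = "{c\<in>subroots i j. snd c = l} - {(i, l)}"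
  have "sum (lookup y) ?C < sum (lookup s) ?C"
  proof (rule sum_strict_mono_ex1)
    show "\<forall>c\<in>?C. lookup y c \<le> lookup s c" using assms(4) by (auto simp: prod_eq_iff)
    show "\<exists>c\<in>?C. lookup y c < lookup s c" using assms(2,3,5) by (intro bexI[of _ "(k, l)"]) auto
  qed simp
  then show ?thesis
    using assms(6) col_sum_split[OF assms(1), of y] col_sum_split[OF assms(1), of s] by linarith
qed

text \<open>Each row operator \<open>e\<^sub>i\<^sub>,\<^sub>m\<close> is applied while row \<open>m+1\<close> is still short of \<open>s\<close>; at a cell
  \<open>(m+1, l)\<close> where it is short, the surplus of column \<open>l\<close> sits in row \<open>i\<close>, so a unit can
  be moved down from \<open>(i, l)\<close>.\<close>
lemma row_ops_witness:
  assumes ij: "1 \<le> i" "j \<le> n - 1" "i \<le> j"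
    and As: "\<forall>\<gamma>\<in>set As. \<exists>m. i \<le> m \<and> m < j \<and> \<gamma> = (i, m)"
    and Bs: "\<forall>\<gamma>\<in>set Bs. \<exists>m. i \<le> m \<and> m < j \<and> \<gamma> = (m + 1, j)"
    and cnt: "\<And>m. i \<le> m \<Longrightarrow> m < j \<Longrightarrow> count_list As (i, m) \<le> row_sum i j s (m + 1)"
    and y0: "y0 \<in> keys (foldr (eact n) Bs (fvar (i, j) ^ N))"
      "\<And>c. fst c \<noteq> i \<Longrightarrow> lookup y0 c \<le> lookup s c" "\<And>l. col_sum i j s l \<le> col_sum i j y0 l"
  shows "\<exists>y\<in>keys (foldr (eact n) (As @ Bs) (fvar (i, j) ^ N)).
    (\<forall>c. fst c \<noteq> i \<longrightarrow> lookup y c \<le> lookup s c) \<and> (\<forall>l. col_sum i j s l \<le> col_sum i j y l)"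
  using As cnt
proof (induction As)
  case Nil
  show ?case by (intro bexI[of _ y0] conjI allI impI) (simp_all add: y0)
next
  case (Cons \<gamma> As)
  let ?q = "foldr (eact n) (As @ Bs) (fvar (i, j) ^ N)"
  obtain m where m: "i \<le> m" "m < j" "\<gamma> = (i, m)" using Cons.prems(1) by auto
  have "count_list As (i, m') \<le> row_sum i j s (m' + 1)" if "i \<le> m'" "m' < j" for m'
    using Cons.prems(2)[OF that] by (simp split: if_splits)
  then obtain y where y: "y \<in> keys ?q" "\<forall>c. fst c \<noteq> i \<longrightarrow> lookup y c \<le> lookup s c"
    "\<forall>l. col_sum i j s l \<le> col_sum i j y l"
    using Cons by auto
  have "\<forall>\<gamma>\<in>set (As @ Bs). admissible_op i j \<gamma>" using Cons.prems(1) Bs by (auto simp: admissible_op_def)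
  note q = foldr_eact_balanced[OF ij this, of N]
  have "count_list Bs (i, m) = 0" using Bs m by (auto simp: count_list_0_iff)
  then have "row_sum i j y (m + 1) = count_list As (i, m)"
    using q y(1) m by (simp add: balanced_def)
  also have "\<dots> < row_sum i j s (m + 1)" using Cons.prems(2)[OF m(1,2)] m(3) by simp
  finally obtain l where l: "(m + 1, l) \<in> subroots i j" "lookup y (m + 1, l) < lookup s (m + 1, l)"
    unfolding row_sum_def by (metis (mono_tags, lifting) mem_Collect_eq not_less prod.collapse sum_mono)
  have il: "(i, l) \<in> subroots i j" using l(1) m by (simp add: subroots_def)
  have "lookup s (i, l) < lookup y (i, l)"
    using col_surplus_in_first_row[OF il l(1) _ y(2) l(2)] y(3) m(1) by simp
  then have pos: "0 < lookup y (i, l)" by simp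
  let ?y = "mono_move y (i, l) (m + 1, l)"
  have "\<forall>x\<in>keys ?q. keys x \<subseteq> subroots i j" using q by (simp add: balanced_def)
  note S = eact_row_op[OF q[THEN conjunct1] this ij(1,2) m(1)]
  have "?y \<in> keys (foldr (eact n) ((\<gamma> # As) @ Bs) (fvar (i, j) ^ N))"
    using S y(1) l(1) pos m by (auto simp: subroots_def intro!: exI[of _ y] exI[of _ l])
  moreover have "lookup ?y c \<le> lookup s c" if "fst c \<noteq> i" for c
  proof (cases "c = (m + 1, l)")
    case True
    then show ?thesis using l(2) by (simp add: mono_move_def lookup_add lookup_minus lookup_single)
  next
    case False
    moreover have "c \<noteq> (i, l)" using that by auto
    ultimately show ?thesis using y(2)[rule_format, OF that] by (simp add: lookup_mono_move_other)
  qed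
  moreover have "col_sum i j ?y l' = col_sum i j y l'" for l'
    using sum_lookup_mono_move[of "{c\<in>subroots i j. snd c = l'}" y "(i, l)" "(m + 1, l)"] pos il l(1)
    by (simp add: col_sum_def)
  ultimately show ?case using y(3) by (intro bexI[of _ ?y]) auto
qed

definition row_ops :: "nat \<Rightarrow> nat \<Rightarrow> mono \<Rightarrow> root list" where
  "row_ops i j s = concat (map (\<lambda>m. replicate (row_sum i j s (m + 1)) (i, m)) [i..<j])"

definition col_ops :: "nat \<Rightarrow> nat \<Rightarrow> mono \<Rightarrow> root list" where
  "col_ops i j s = concat (map (\<lambda>m. replicate (col_sum i j s m) (m + 1, j)) [i..<j])"

lemma count_list_concat_replicate:
  "count_list (concat (map (\<lambda>m. replicate (h m) (f m)) [i..<j])) a = (\<Sum>m\<in>{i..<j}. if f m = a then h m else 0)"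
proof -
  have "count_list (concat (map (\<lambda>m. replicate (h m) (f m)) xs)) a = (\<Sum>m\<leftarrow>xs. if f m = a then h m else 0)" for xs
    by (induction xs) (auto simp: count_list_eq_length_filter)
  then show ?thesis by (simp add: interv_sum_list_conv_sum_set_nat)
qed

lemma count_list_ops:
  assumes "i \<le> m" "m < j"
  shows "count_list (row_ops i j s @ col_ops i j s) (i, m) = row_sum i j s (m + 1)"
    and "count_list (row_ops i j s @ col_ops i j s) (m + 1, j) = col_sum i j s m"
  using assms by (simp_all add: row_ops_def col_ops_def count_list_append count_list_concat_replicate
      if_distrib[of "\<lambda>x. x = _"] cong: if_cong)

lemma set_row_ops: "\<gamma> \<in> set (row_ops i j s) \<Longrightarrow> \<exists>m. i \<le> m \<and> m < j \<and> \<gamma> = (i, m)"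
  by (auto simp: row_ops_def split: if_splits)

lemma set_col_ops: "\<gamma> \<in> set (col_ops i j s) \<Longrightarrow> \<exists>m. i \<le> m \<and> m < j \<and> \<gamma> = (m + 1, j)"
  by (auto simp: col_ops_def split: if_splits)

lemma length_col_ops: "length (col_ops i j s) = (\<Sum>m\<in>{i..<j}. col_sum i j s m)"
  by (simp add: col_ops_def length_concat comp_def interv_sum_list_conv_sum_set_nat)

definition straightening_ops :: "nat \<Rightarrow> nat \<Rightarrow> mono \<Rightarrow> root list" where
  "straightening_ops i j s = row_ops i j s @ col_ops i j s"

definition straightening :: "nat \<Rightarrow> nat \<Rightarrow> nat \<Rightarrow> mono \<Rightarrow> poly" where
  "straightening n i j s = foldr (eact n) (straightening_ops i j s) (fvar (i, j) ^ total i j s)"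

lemma admissible_straightening_ops: "\<forall>\<gamma>\<in>set (straightening_ops i j s). admissible_op i j \<gamma>"
  unfolding straightening_ops_def admissible_op_def using set_row_ops set_col_ops by fastforce

lemma straightening_same_margins:
  assumes ij: "1 \<le> i" "j \<le> n - 1" "i \<le> j" and "x \<in> keys (straightening n i j s)"
  shows "same_margins i j s x"
  using foldr_eact_balanced[OF ij admissible_straightening_ops] assms(4) count_list_ops
  by (intro balanced_same_margins[OF ij(3)]) (auto simp: straightening_def straightening_ops_def)

lemma keys_straightening:
  assumes ij: "1 \<le> i" "j \<le> n - 1" "i \<le> j" and s: "keys s \<subseteq> subroots i j" "chain_supported s"
    and x: "x \<in> keys (straightening n i j s)"
  shows "keys x \<subseteq> subroots i j \<and> (x = s \<or> mono_less n x s)"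
  using straightening_same_margins[OF ij x]
    same_margins_chain_imp_mono_less[OF _ s subroots_subset_Rplus[OF ij(1,2)]]
  unfolding same_margins_def by blast

text \<open>The column operators can all be applied to row \<open>i\<close>, giving a monomial that agrees with \<open>s\<close>
  on the columns \<open>m < j\<close>; then the row operators fill rows \<open>i+1, \<dots>, j\<close> as in \<open>s\<close>.\<close>
lemma mem_keys_straightening:
  assumes ij: "1 \<le> i" "j \<le> n - 1" "i \<le> j" and s: "keys s \<subseteq> subroots i j"
  shows "s \<in> keys (straightening n i j s)"
proof -
  let ?N = "total i j s"
  have "length (col_ops i j s) \<le> ?N"
    using total_eq_col_sums[OF ij(3), of s] by (simp add: length_col_ops)
  then obtain y0 where y0: "y0 \<in> keys (foldr (eact n) (col_ops i j s) (fvar (i, j) ^ ?N))"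
    "keys y0 \<subseteq> {c. fst c = i}" "lookup y0 (i, j) + length (col_ops i j s) = ?N"
    using col_ops_witness[OF ij] set_col_ops by blast
  have "\<forall>\<gamma>\<in>set (col_ops i j s). admissible_op i j \<gamma>"
    using admissible_straightening_ops[of i j s] by (simp add: straightening_ops_def)
  then have bal0: "balanced i j ?N (col_ops i j s) y0" using foldr_eact_balanced[OF ij] y0(1) by blast
  have col: "col_sum i j s l \<le> col_sum i j y0 l" for l
  proof -
    consider "i \<le> l \<and> l < j" | "l = j" | "\<not> (i \<le> l \<and> l \<le> j)" by linarith
    then show ?thesis
    proof cases
      case 1
      then have "count_list (row_ops i j s) (l + 1, j) = 0" by (auto simp: count_list_0_iff dest: set_row_ops)
      then show ?thesis using 1 bal0 count_list_ops(2)[of i l j s] by (simp add: balanced_def)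
    next
      case 2
      have "lookup y0 (i, j) = col_sum i j s j"
        using y0(3) total_eq_col_sums[OF ij(3), of s] by (simp add: length_col_ops)
      moreover have "lookup y0 (i, j) \<le> col_sum i j y0 j"
        using col_sum_split[of i j i j y0] ij(3) by (simp add: subroots_def)
      ultimately show ?thesis using 2 by simp
    qed (simp add: col_sum_outside)
  qed
  have le: "lookup y0 c \<le> lookup s c" if "fst c \<noteq> i" for c
    using lookup_eq_0_outside[OF y0(2)] that by simp
  have cnt: "count_list (row_ops i j s) (i, m) \<le> row_sum i j s (m + 1)" if "i \<le> m" "m < j" for m
    using count_list_ops(1)[OF that, of s] by simp
  have As: "\<forall>\<gamma>\<in>set (row_ops i j s). \<exists>m. i \<le> m \<and> m < j \<and> \<gamma> = (i, m)"
    and Bs: "\<forall>\<gamma>\<in>set (col_ops i j s). \<exists>m. i \<le> m \<and> m < j \<and> \<gamma> = (m + 1, j)"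
    using set_row_ops set_col_ops by blast+
  obtain y where y: "y \<in> keys (straightening n i j s)" "\<forall>c. fst c \<noteq> i \<longrightarrow> lookup y c \<le> lookup s c"
    using row_ops_witness[OF ij As Bs cnt y0(1) le col] unfolding straightening_def straightening_ops_def
    by blast
  then have "y = s" using same_margins_eqI[OF straightening_same_margins[OF ij y(1)] s] by blast
  with y(1) show ?thesis by simp
qed

lemma dyck_path_nth_mono:
  assumes "dyck_path n p" "b < length p" "a \<le> b"
  shows "fst (p ! a) \<le> fst (p ! b) \<and> snd (p ! a) \<le> snd (p ! b) \<and>
    fst (p ! b) + snd (p ! b) = fst (p ! a) + snd (p ! a) + (b - a)"
  using assms(2,3)
proof (induction b)
  case (Suc b)
  show ?case
  proof (cases "a = Suc b")
    case False
    then have "p ! Suc b = (fst (p ! b) + 1, snd (p ! b)) \<or> p ! Suc b = (fst (p ! b), snd (p ! b) + 1)"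
      using assms(1) Suc.prems unfolding dyck_path_def by blast
    with Suc False show ?thesis by auto
  qed simp
qed simp

lemma distinct_dyck_path:
  assumes "dyck_path n p"
  shows "distinct p"
  unfolding distinct_conv_nth
proof (intro allI impI)
  fix a b assume "a < length p" "b < length p" "a \<noteq> b"
  then show "p ! a \<noteq> p ! b"
    using dyck_path_nth_mono[OF assms, of a b] dyck_path_nth_mono[OF assms, of b a]
    by (cases "a < b") auto
qed

lemma dyck_path_chain:
  assumes "dyck_path n p" "\<alpha> \<in> set p" "\<beta> \<in> set p"
  shows "(fst \<alpha> \<le> fst \<beta> \<and> snd \<alpha> \<le> snd \<beta>) \<or> (fst \<beta> \<le> fst \<alpha> \<and> snd \<beta> \<le> snd \<alpha>)"
proof -
  obtain a b where "a < length p" "b < length p" "\<alpha> = p ! a" "\<beta> = p ! b"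
    using assms(2,3) by (metis in_set_conv_nth)
  then show ?thesis
    using dyck_path_nth_mono[OF assms(1), of a b] dyck_path_nth_mono[OF assms(1), of b a]
    by (cases "a \<le> b") auto
qed

lemma dyck_path_subroots:
  assumes "dyck_path n p"
  shows "set p \<subseteq> subroots (fst (hd p)) (snd (last p))" and "base_root p \<in> Rplus n"
proof -
  have ne: "p \<noteq> []" and p: "set p \<subseteq> Rplus n" using assms dyck_path_def by blast+
  have bounds: "fst (hd p) \<le> fst \<alpha> \<and> snd \<alpha> \<le> snd (last p)" if \<alpha>: "\<alpha> \<in> set p" for \<alpha>
  proof -
    obtain a where a: "a < length p" "\<alpha> = p ! a" using \<alpha> by (metis in_set_conv_nth)
    have "fst (p ! 0) \<le> fst (p ! a)" using dyck_path_nth_mono[OF assms a(1), of 0] by simp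
    moreover have "snd (p ! a) \<le> snd (p ! (length p - 1))"
      using dyck_path_nth_mono[OF assms, of "length p - 1" a] a(1) by simp
    ultimately show ?thesis using a ne by (simp add: hd_conv_nth last_conv_nth)
  qed
  show "set p \<subseteq> subroots (fst (hd p)) (snd (last p))"
  proof
    fix \<alpha> assume \<alpha>: "\<alpha> \<in> set p"
    with p have "\<alpha> \<in> Rplus n" by blast
    with bounds[OF \<alpha>] show "\<alpha> \<in> subroots (fst (hd p)) (snd (last p))"
      by (cases \<alpha>) (simp add: subroots_def Rplus_def)
  qed
  have "hd p \<in> Rplus n" "last p \<in> Rplus n" "fst (hd p) \<le> fst (last p)"
    using ne p bounds[of "last p"] by auto
  then show "base_root p \<in> Rplus n"
    by (cases "hd p", cases "last p") (simp add: base_root_def Rplus_def)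
qed

lemma exists_submono_with_sum:
  fixes m :: mono
  assumes "finite A" "N \<le> (\<Sum>c\<in>A. lookup m c)"
  shows "\<exists>s. (\<forall>c. lookup s c \<le> lookup m c) \<and> keys s \<subseteq> A \<and> (\<Sum>c\<in>A. lookup s c) = N"
  using assms
proof (induction A arbitrary: N rule: finite_induct)
  case empty
  then show ?case by (intro exI[of _ 0]) simp
next
  case (insert x A)
  define r where "r = N - (\<Sum>c\<in>A. lookup m c)"
  have "N - r \<le> (\<Sum>c\<in>A. lookup m c)" by (simp add: r_def)
  then obtain s where s: "\<forall>c. lookup s c \<le> lookup m c" "keys s \<subseteq> A" "(\<Sum>c\<in>A. lookup s c) = N - r"
    using insert.IH by blast
  have sx: "lookup s x = 0" using s(2) insert.hyps(2) by (auto simp: in_keys_iff)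
  have "r \<le> lookup m x" using insert.prems insert.hyps by (simp add: r_def)
  then have "\<forall>c. lookup (s + Poly_Mapping.single x r) c \<le> lookup m c"
    using s(1) sx by (auto simp: lookup_add lookup_single when_def)
  moreover have "keys (s + Poly_Mapping.single x r) \<subseteq> insert x A"
  proof -
    have "keys (Poly_Mapping.single x r) \<subseteq> {x}" by simp
    then show ?thesis using s(2) keys_add[of s "Poly_Mapping.single x r"] by blast
  qed
  moreover have "(\<Sum>c\<in>insert x A. lookup (s + Poly_Mapping.single x r) c) = N"
  proof -
    have "(\<Sum>c\<in>A. lookup (s + Poly_Mapping.single x r) c) = (\<Sum>c\<in>A. lookup s c)"
      using insert.hyps(2) by (intro sum.cong) (auto simp: lookup_add lookup_single when_def)
    then show ?thesis using insert.hyps s(3) sx by (simp add: lookup_add r_def)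
  qed
  ultimately show ?case by blast
qed

text \<open>The chain is cut out of a Dyck path whose inequality \<open>m\<close> violates.\<close>
lemma chain_submono_if_notin_Sa:
  assumes "keys m \<subseteq> Rplus n" "m \<notin> Sa n a"
  obtains i j s where "1 \<le> i" "j \<le> n - 1" "i \<le> j" "keys s \<subseteq> subroots i j" "chain_supported s"
    "total i j s = a (i, j) + 1" "\<And>c. lookup s c \<le> lookup m c"
proof -
  obtain p where p: "dyck_path n p" and viol: "a (base_root p) < (\<Sum>\<alpha>\<leftarrow>p. lookup m \<alpha>)"
    using assms unfolding Sa_def by (auto simp: not_le)
  define i j where "i = fst (hd p)" and "j = snd (last p)"
  have ij: "base_root p = (i, j)" by (simp add: base_root_def i_def j_def)
  have sub: "set p \<subseteq> subroots i j" and "(i, j) \<in> Rplus n"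
    using dyck_path_subroots[OF p] ij by (simp_all add: i_def j_def)
  then have "1 \<le> i" "j \<le> n - 1" "i \<le> j" by (auto simp: Rplus_def)
  have "a (i, j) + 1 \<le> (\<Sum>c\<in>set p. lookup m c)"
    using viol[unfolded sum_list_distinct_conv_sum_set[OF distinct_dyck_path[OF p]]] ij by simp
  then obtain s where s: "\<forall>c. lookup s c \<le> lookup m c" "keys s \<subseteq> set p"
    "(\<Sum>c\<in>set p. lookup s c) = a (i, j) + 1"
    using exists_submono_with_sum[of "set p"] by blast
  have "total i j s = (\<Sum>c\<in>set p. lookup s c)"
    unfolding total_def using s(2) sub
    by (intro sum.mono_neutral_right finite_subroots) (auto simp: in_keys_iff)
  moreover have "chain_supported s"
    using s(2) dyck_path_chain[OF p] unfolding chain_supported_def by blast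
  moreover have "keys s \<subseteq> subroots i j" using s(2) sub by blast
  ultimately show ?thesis
    using that[OF \<open>1 \<le> i\<close> \<open>j \<le> n - 1\<close> \<open>i \<le> j\<close>] s(1,3) by metis
qed

lemma Sn_add: "p \<in> Sn n \<Longrightarrow> q \<in> Sn n \<Longrightarrow> p + q \<in> Sn n"
  unfolding Sn_def using keys_add[of p q] by blast

lemma Sn_mult:
  assumes "p \<in> Sn n" "q \<in> Sn n"
  shows "p * q \<in> Sn n"
  unfolding Sn_def
proof (intro CollectI ballI)
  fix m assume "m \<in> keys (p * q)"
  then obtain u v where "m = u + v" "u \<in> keys p" "v \<in> keys q" using keys_mult[of p q] by blast
  then show "keys m \<subseteq> Rplus n" using assms keys_add[of u v] unfolding Sn_def by blast
qed

lemma Sn_fmon: "keys m \<subseteq> Rplus n \<Longrightarrow> fmon m \<in> Sn n"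
  by (simp add: Sn_def)

lemma Sn_const_poly: "const_poly c \<in> Sn n"
  by (simp add: Sn_def const_poly_def)

lemma Igen_foldr_eact: "g \<in> Igen n a \<Longrightarrow> set os \<subseteq> Rplus n \<Longrightarrow> foldr (eact n) os g \<in> Igen n a"
  by (induction os) (simp_all add: Igen.step)

lemma Ia_sum_mult: "finite F \<Longrightarrow> F \<subseteq> Igen n a \<Longrightarrow> (\<And>g. g \<in> F \<Longrightarrow> q g \<in> Sn n) \<Longrightarrow> (\<Sum>g\<in>F. q g * g) \<in> Ia n a"
  unfolding Ia_def ideal_gen_def by (rule CollectI, rule exI[of _ F], rule exI[of _ q]) blast

lemma Ia_zero: "0 \<in> Ia n a"
  using Ia_sum_mult[of "{}"] by simp

lemma Igen_mult_in_Ia: "g \<in> Igen n a \<Longrightarrow> r \<in> Sn n \<Longrightarrow> r * g \<in> Ia n a"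
  using Ia_sum_mult[of "{g}" n a "\<lambda>_. r"] by simp

lemma straightening_in_Igen:
  assumes "1 \<le> i" "j \<le> n - 1" "i \<le> j" "total i j s = a (i, j) + 1"
  shows "straightening n i j s \<in> Igen n a"
proof -
  have "set (straightening_ops i j s) \<subseteq> Rplus n"
    using admissible_straightening_ops[of i j s] assms(1,2) by (auto simp: admissible_op_def Rplus_def)
  moreover have "(i, j) \<in> Rplus n" using assms(1-3) by (simp add: Rplus_def)
  ultimately show ?thesis
    unfolding straightening_def assms(4) by (intro Igen_foldr_eact Igen.base)
qed

lemma sum_if_mem_mult:
  assumes "finite G" "F \<subseteq> G"
  shows "(\<Sum>g\<in>G. (if g \<in> F then q g else 0) * g) = (\<Sum>g\<in>F. q g * (g :: poly))"
  by (rule sum.mono_neutral_cong_right) (use assms in auto)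

lemma Ia_add:
  assumes "p \<in> Ia n a" "p' \<in> Ia n a"
  shows "p + p' \<in> Ia n a"
proof -
  obtain F q where F: "p = (\<Sum>g\<in>F. q g * g)" "finite F" "F \<subseteq> Igen n a" "\<forall>g\<in>F. q g \<in> Sn n"
    using assms(1) unfolding Ia_def ideal_gen_def by blast
  obtain F' q' where F': "p' = (\<Sum>g\<in>F'. q' g * g)" "finite F'" "F' \<subseteq> Igen n a" "\<forall>g\<in>F'. q' g \<in> Sn n"
    using assms(2) unfolding Ia_def ideal_gen_def by blast
  define r where "r g = (if g \<in> F then q g else 0) + (if g \<in> F' then q' g else 0)" for g
  have "p + p' = (\<Sum>g\<in>F \<union> F'. r g * g)"
    unfolding r_def distrib_right sum.distrib F(1) F'(1)
    using sum_if_mem_mult[of "F \<union> F'" F q] sum_if_mem_mult[of "F \<union> F'" F' q'] F(2) F'(2) by simp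
  moreover have "r g \<in> Sn n" if "g \<in> F \<union> F'" for g
    unfolding r_def using F(4) F'(4) by (intro Sn_add) (simp_all add: Sn_def)
  ultimately show ?thesis using Ia_sum_mult[of "F \<union> F'"] F F' by simp
qed

lemma Ia_mult:
  assumes "r \<in> Sn n" "p \<in> Ia n a"
  shows "r * p \<in> Ia n a"
proof -
  obtain F q where F: "p = (\<Sum>g\<in>F. q g * g)" "finite F" "F \<subseteq> Igen n a" "\<forall>g\<in>F. q g \<in> Sn n"
    using assms(2) unfolding Ia_def ideal_gen_def by blast
  have "r * p = (\<Sum>g\<in>F. (r * q g) * g)" unfolding F(1) sum_distrib_left by (simp add: mult.assoc)
  then show ?thesis using Ia_sum_mult[of F n a "\<lambda>g. r * q g"] F assms(1) Sn_mult by simp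
qed

definition spanned :: "nat \<Rightarrow> (root \<Rightarrow> nat) \<Rightarrow> poly \<Rightarrow> bool" where
  "spanned n a p \<longleftrightarrow> (\<exists>q. keys q \<subseteq> Sa n a \<and> p - q \<in> Ia n a)"

lemma spanned_Ia: "p \<in> Ia n a \<Longrightarrow> spanned n a p"
  unfolding spanned_def by (intro exI[of _ 0]) simp

lemma spanned_fmon: "s \<in> Sa n a \<Longrightarrow> spanned n a (fmon s)"
  unfolding spanned_def by (intro exI[of _ "fmon s"]) (simp add: Ia_zero)

lemma spanned_add: "spanned n a p \<Longrightarrow> spanned n a p' \<Longrightarrow> spanned n a (p + p')"
  unfolding spanned_def
proof (elim exE conjE)
  fix q q' assume q: "keys q \<subseteq> Sa n a" "p - q \<in> Ia n a" and q': "keys q' \<subseteq> Sa n a" "p' - q' \<in> Ia n a"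
  have "p + p' - (q + q') = (p - q) + (p' - q')" by (simp add: algebra_simps)
  then have "p + p' - (q + q') \<in> Ia n a" using Ia_add[OF q(2) q'(2)] by (simp only:)
  then show "\<exists>r. keys r \<subseteq> Sa n a \<and> p + p' - r \<in> Ia n a"
    using q(1) q'(1) keys_add[of q q'] by (intro exI[of _ "q + q'"]) auto
qed

lemma spanned_const_poly_mult: "spanned n a p \<Longrightarrow> spanned n a (const_poly d * p)"
  unfolding spanned_def
proof (elim exE conjE)
  fix q assume q: "keys q \<subseteq> Sa n a" "p - q \<in> Ia n a"
  have "keys (const_poly d * q) \<subseteq> keys q" by (auto simp: in_keys_iff lookup_const_poly_mult)
  moreover have "const_poly d * p - const_poly d * q \<in> Ia n a"
    using Ia_mult[OF Sn_const_poly q(2)] by (simp add: right_diff_distrib)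
  ultimately show "\<exists>r. keys r \<subseteq> Sa n a \<and> const_poly d * p - r \<in> Ia n a"
    using q(1) by blast
qed

lemma spanned_sum: "finite I \<Longrightarrow> (\<And>i. i \<in> I \<Longrightarrow> spanned n a (f i)) \<Longrightarrow> spanned n a (sum f I)"
  by (induction I rule: finite_induct) (simp_all add: spanned_Ia Ia_zero spanned_add)

lemma fmon_mult_eq_sum: "fmon u * R = (\<Sum>x\<in>keys R. const_poly (lookup R x) * fmon (u + x))"
  by (subst poly_eq_sum_fmon[of R])
    (simp add: sum_distrib_left mult.left_commute[of "fmon u"] fmon_mult)

lemma spanned_fmon_reduce:
  assumes X: "fmon u * R \<in> Ia n a" and s: "s \<in> keys R"
    and others: "\<And>x. x \<in> keys R \<Longrightarrow> x \<noteq> s \<Longrightarrow> spanned n a (fmon (u + x))"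
  shows "spanned n a (fmon (u + s))"
proof -
  define c where "c = lookup R s"
  define S where "S = (\<Sum>x\<in>keys R - {s}. const_poly (lookup R x) * fmon (u + x))"
  have "c \<noteq> 0" using s by (simp add: c_def in_keys_iff)
  have "spanned n a S"
    unfolding S_def by (intro spanned_sum spanned_const_poly_mult others) auto
  have "fmon u * R = const_poly c * fmon (u + s) + S"
    unfolding fmon_mult_eq_sum S_def c_def using sum.remove[OF finite_keys s] by simp
  then have "const_poly (1 / c) * (fmon u * R) = fmon (u + s) + const_poly (1 / c) * S"
    using \<open>c \<noteq> 0\<close> by (simp add: distrib_left mult.assoc[symmetric] const_poly_mult_const_poly)
  then have "fmon (u + s) = const_poly (1 / c) * (fmon u * R) + const_poly (- (1 / c)) * S"
    by (simp add: const_poly_uminus_mult)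
  then show ?thesis
    using spanned_add[OF spanned_const_poly_mult[OF spanned_Ia[OF X]] spanned_const_poly_mult[OF \<open>spanned n a S\<close>]]
    by simp
qed

lemma spanned_fmon_Rplus: "keys m \<subseteq> Rplus n \<Longrightarrow> spanned n a (fmon m)"
proof (induction m rule: wf_induct_rule[OF wf_mono_less[of n]])
  case (1 m)
  show ?case
  proof (cases "m \<in> Sa n a")
    case False
    then obtain i j s where ij: "1 \<le> i" "j \<le> n - 1" "i \<le> j" and s: "keys s \<subseteq> subroots i j"
      "chain_supported s" "total i j s = a (i, j) + 1" "\<And>c. lookup s c \<le> lookup m c"
      using chain_submono_if_notin_Sa[OF "1.prems"] by blast
    define R where "R = straightening n i j s"
    define u where "u = m - s"
    have m: "m = u + s"
      using s(4) by (intro poly_mapping_eqI) (simp add: u_def lookup_add lookup_minus)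
    have u: "keys u \<subseteq> Rplus n" using "1.prems" m keys_add[of u s] by (auto simp: in_keys_iff lookup_add)
    have "fmon u * R \<in> Ia n a"
      unfolding R_def using Igen_mult_in_Ia[OF straightening_in_Igen[where a = a, OF ij s(3)] Sn_fmon[OF u]] .
    moreover have "s \<in> keys R" unfolding R_def by (rule mem_keys_straightening[OF ij s(1)])
    moreover have "spanned n a (fmon (u + x))" if x: "x \<in> keys R" "x \<noteq> s" for x
    proof (rule "1.IH")
      have kx: "keys x \<subseteq> subroots i j \<and> (x = s \<or> mono_less n x s)"
        using keys_straightening[OF ij s(1,2)] x(1) by (simp add: R_def)
      then show "(u + x, m) \<in> {(x, y). mono_less n x y}" using x(2) m mono_less_add by simp
      show "keys (u + x) \<subseteq> Rplus n"
        using kx u keys_add[of u x] subroots_subset_Rplus[OF ij(1,2)] by blast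
    qed
    ultimately show ?thesis using spanned_fmon_reduce m by blast
  qed (rule spanned_fmon)
qed

theorem lemma4p1:
  fixes n :: nat and a :: "root \<Rightarrow> nat"
  shows "\<forall>p \<in> Sn n. \<exists>F (c :: mono \<Rightarrow> complex). finite F \<and> F \<subseteq> Sa n a \<and>
           p - (\<Sum>s \<in> F. const_poly (c s) * fmon s) \<in> Ia n a"
proof
  fix p assume p: "p \<in> Sn n"
  have "spanned n a (\<Sum>m\<in>keys p. const_poly (lookup p m) * fmon m)"
    using p by (intro spanned_sum spanned_const_poly_mult spanned_fmon_Rplus) (auto simp: Sn_def)
  then obtain q where q: "keys q \<subseteq> Sa n a" "p - q \<in> Ia n a"
    unfolding spanned_def by (auto simp flip: poly_eq_sum_fmon)
  then show "\<exists>F (c :: mono \<Rightarrow> complex). finite F \<and> F \<subseteq> Sa n a \<and>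
      p - (\<Sum>s \<in> F. const_poly (c s) * fmon s) \<in> Ia n a"
    by (intro exI[of _ "keys q"] exI[of _ "lookup q"]) (simp flip: poly_eq_sum_fmon)
qed

end
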